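(* Let $L$ be an oriented, ordered virtual link diagram with affine bilabeling $C$. Let $L_i$ be a component with starting bilabel $(a_1,a_2)$ and weight $n$; put $A=a_1+a_2$. Let $c$ be the first classical crossing met by $L_i$ after its starting point. The crossing $c$ involves components $i$ and $j$, where possibly $j=i$. Let $\iota$ be the index change of $L_i$'s passage through $c$. Let $C'$ be the coloring obtained by moving the starting point of $L_i$ forward just past this passage through $c$, keeping the same starting bilabel. Write $p_{(L,C)}=\sum_{d}\operatorname{sgn}(d)\,t_{o(d)}^{W_C(d)}-\mathrm{writhe}(L)$. Then $p_{(L,C')}$ is obtained from $p_{(L,C)}$ by: - replacing $A$ with $A-\iota$ in every exponent; and - multiplying the monomial corresponding to the crossing $c$ by $t_i^{\,n}$ if $L_i$ passed through the overstrand of $c$, or by $t_j^{-n}$ if $L_i$ passed through the understrand of $c$ (here $j=o(c)$ is the component of the overstrand).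
   Context: **Diagrams.** A virtual link diagram is an oriented planar diagram of ordered closed curves $L_1,\dots,L_n$ (components) with classical and virtual crossings. **Crossing conventions.** Draw a classical crossing with both strands oriented upward. - The bottom-left-to-top-right strand has index change $-1$; the bottom-right-to-top-left strand has index change $+1$. - The crossing is positive ($\operatorname{sgn}=+1$) if the overstrand is the bottom-left-to-top-right strand, and negative otherwise. - Self-crossings have both strands on one component; external crossings have strands on different components. - The weight of $L_i$ is the sum of the index changes of $L_i$ over its passages through external classical crossings. **Affine bilabeling.** - Each component $L_k$ gets a starting point with bilabel $(a^{(k)}_1,a^{(k)}_2)$ of formal integer variables, distinct for different components. - The bilabel is carried along the component in its orientation and is unchanged at virtual crossings. - At a classical crossing with index change $\varepsilon$, the first entry changes by $\varepsilon$ at a self-crossing, and the second entry changes by $\varepsilon$ at an external crossing. - The discrepancy (the component weight, in the second entry) on returning is placed at the starting point. **Weights and polynomial.** Let $|(x,y)|=x+y$. With both strands drawn upward: - if $c$ is positive, $W(c)=|\text{bottom-left}|-|\text{top-left}|$; - if $c$ is negative, $W(c)=|\text{bottom-right}|-|\text{top-right}|$. These are integer linear expressions in the sums $a^{(k)}_1+a^{(k)}_2$. The multi-variable affine index polynomial is $p_{(L,C)}=\sum_c\operatorname{sgn}(c)(t_{o(c)}^{W(c)}-1)$ over classical crossings, where $o(c)$ is the component of the overstrand. *)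

theory Defs
  imports Main
begin

text \<open>
  A virtual link diagram is encoded by its Gauss data (virtual crossings play no
  role: labels are unchanged there).  Components are numbered 0,...,N-1 (ordered).
  For each component k, S k is the list of its passages through classical
  crossings, in the order met when traversing k in its orientation starting from
  its starting point.  A passage is a pair (c, b): crossing c, b = True for the
  overstrand passage, False for the understrand passage.  sg c is the sign of c.
\<close>

type_synonym passage = "nat \<times> bool"
type_synonym gauss = "nat \<Rightarrow> passage list"

definition all_passages :: "nat \<Rightarrow> gauss \<Rightarrow> passage list" where
  "all_passages N S = concat (map S [0..<N])"

definition crossings :: "nat \<Rightarrow> gauss \<Rightarrow> nat set" where
  "crossings N S = {c. (c, True) \<in> set (all_passages N S)}"

definition virtual_link_diagram :: "nat \<Rightarrow> gauss \<Rightarrow> (nat \<Rightarrow> int) \<Rightarrow> bool" where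
  "virtual_link_diagram N S sg \<longleftrightarrow>
     distinct (all_passages N S) \<and>
     (\<forall>c. (c, True) \<in> set (all_passages N S) \<longleftrightarrow> (c, False) \<in> set (all_passages N S)) \<and>
     (\<forall>c \<in> crossings N S. sg c = 1 \<or> sg c = -1)"

definition comp_of :: "nat \<Rightarrow> gauss \<Rightarrow> passage \<Rightarrow> nat" where
  "comp_of N S p = (THE k. k < N \<and> p \<in> set (S k))"

definition pos_of :: "gauss \<Rightarrow> nat \<Rightarrow> passage \<Rightarrow> nat" where
  "pos_of S k p = (THE m. m < length (S k) \<and> S k ! m = p)"

definition over_comp :: "nat \<Rightarrow> gauss \<Rightarrow> nat \<Rightarrow> nat" where
  "over_comp N S c = comp_of N S (c, True)"

definition is_self :: "nat \<Rightarrow> gauss \<Rightarrow> nat \<Rightarrow> bool" where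
  "is_self N S c \<longleftrightarrow> comp_of N S (c, True) = comp_of N S (c, False)"

text \<open>With both strands drawn upward: the bottom-left-to-top-right strand (alpha) is
  the overstrand iff the crossing is positive; the other strand is beta.\<close>
definition alpha_passage :: "(nat \<Rightarrow> int) \<Rightarrow> nat \<Rightarrow> passage" where
  "alpha_passage sg c = (c, sg c = 1)"

definition beta_passage :: "(nat \<Rightarrow> int) \<Rightarrow> nat \<Rightarrow> passage" where
  "beta_passage sg c = (c, sg c \<noteq> 1)"

definition index_change :: "(nat \<Rightarrow> int) \<Rightarrow> passage \<Rightarrow> int" where
  "index_change sg p = (if p = alpha_passage sg (fst p) then -1 else 1)"

text \<open>bilabel on the arc entering the m-th passage of component k
  (starting bilabel (a1 k, a2 k))\<close>
definition label_at :: "nat \<Rightarrow> gauss \<Rightarrow> (nat \<Rightarrow> int) \<Rightarrow> (nat \<Rightarrow> int) \<Rightarrow> (nat \<Rightarrow> int)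
    \<Rightarrow> nat \<Rightarrow> nat \<Rightarrow> int \<times> int" where
  "label_at N S sg a1 a2 k m =
     (a1 k + (\<Sum>l<m. if is_self N S (fst (S k ! l)) then index_change sg (S k ! l) else 0),
      a2 k + (\<Sum>l<m. if is_self N S (fst (S k ! l)) then 0 else index_change sg (S k ! l)))"

definition label_in :: "nat \<Rightarrow> gauss \<Rightarrow> (nat \<Rightarrow> int) \<Rightarrow> (nat \<Rightarrow> int) \<Rightarrow> (nat \<Rightarrow> int)
    \<Rightarrow> passage \<Rightarrow> int \<times> int" where
  "label_in N S sg a1 a2 p =
     label_at N S sg a1 a2 (comp_of N S p) (pos_of S (comp_of N S p) p)"

definition label_out :: "nat \<Rightarrow> gauss \<Rightarrow> (nat \<Rightarrow> int) \<Rightarrow> (nat \<Rightarrow> int) \<Rightarrow> (nat \<Rightarrow> int)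
    \<Rightarrow> passage \<Rightarrow> int \<times> int" where
  "label_out N S sg a1 a2 p =
     label_at N S sg a1 a2 (comp_of N S p) (Suc (pos_of S (comp_of N S p) p))"

definition babs :: "int \<times> int \<Rightarrow> int" where
  "babs x = fst x + snd x"

text \<open>W(c); bottom-left = in(alpha), top-right = out(alpha),
  bottom-right = in(beta), top-left = out(beta)\<close>
definition crossing_weight :: "nat \<Rightarrow> gauss \<Rightarrow> (nat \<Rightarrow> int) \<Rightarrow> (nat \<Rightarrow> int) \<Rightarrow> (nat \<Rightarrow> int)
    \<Rightarrow> nat \<Rightarrow> int" where
  "crossing_weight N S sg a1 a2 c =
     (if sg c = 1
      then babs (label_in N S sg a1 a2 (alpha_passage sg c)) - babs (label_out N S sg a1 a2 (beta_passage sg c))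
      else babs (label_in N S sg a1 a2 (beta_passage sg c)) - babs (label_out N S sg a1 a2 (alpha_passage sg c)))"

definition comp_weight :: "nat \<Rightarrow> gauss \<Rightarrow> (nat \<Rightarrow> int) \<Rightarrow> nat \<Rightarrow> int" where
  "comp_weight N S sg k =
     (\<Sum>l<length (S k). if is_self N S (fst (S k ! l)) then 0 else index_change sg (S k ! l))"

definition writhe :: "nat \<Rightarrow> gauss \<Rightarrow> (nat \<Rightarrow> int) \<Rightarrow> int" where
  "writhe N S sg = (\<Sum>c\<in>crossings N S. sg c)"

text \<open>Laurent polynomials in t_0, t_1, ... are coefficient functions on exponent
  vectors; expv k w is the exponent vector of t_k^w.\<close>
definition expv :: "nat \<Rightarrow> int \<Rightarrow> nat \<Rightarrow> int" where
  "expv k w = (\<lambda>l. if l = k then w else 0)"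

definition affine_index_poly :: "nat \<Rightarrow> gauss \<Rightarrow> (nat \<Rightarrow> int) \<Rightarrow> (nat \<Rightarrow> int) \<Rightarrow> (nat \<Rightarrow> int)
    \<Rightarrow> (nat \<Rightarrow> int) \<Rightarrow> int" where
  "affine_index_poly N S sg a1 a2 =
     (\<lambda>e. \<Sum>c\<in>crossings N S. sg c *
        ((if e = expv (over_comp N S c) (crossing_weight N S sg a1 a2 c) then 1 else 0)
         - (if e = (\<lambda>_. 0) then 1 else 0)))"

end

theory Submission
  imports Defs
begin

text \<open>
  The weight W only sees the sums |(x,y)| = x + y of the labels.  Along a component this sum is
  the starting sum plus the index changes met so far, and since every self-crossing of L_i is
  passed once with index change +1 and once with -1, a full turn around L_i adds exactly its
  weight n.  Hence, once the old starting sum A is replaced by A - \<iota>, the colorings C and C'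
  give the same sums on every arc, except at the passage of L_i through c: in C' it is the
  last passage met, so its incoming and outgoing sums are both larger by n.  As W(c) is the
  incoming sum of one strand minus the outgoing sum of the other, W(c) grows by n if L_i is
  the overstrand of c and drops by n otherwise; the writhe is unchanged.
\<close>

lemma sum_involution_neg_eq_0:
  fixes h :: "'a \<Rightarrow> 'b::linordered_ab_group_add"
  assumes "\<And>x. x \<in> T \<Longrightarrow> \<sigma> x \<in> T" "\<And>x. x \<in> T \<Longrightarrow> \<sigma> (\<sigma> x) = x"
    and "\<And>x. x \<in> T \<Longrightarrow> h (\<sigma> x) = - h x"
  shows "sum h T = 0"
proof -
  have "sum h T = sum (\<lambda>x. - h x) T"
    by (rule sum.reindex_bij_witness[of _ \<sigma> \<sigma>]) (use assms in auto)
  then show ?thesis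
    by (simp add: sum_negf)
qed

lemma sum_nth_eq_sum_set: "distinct xs \<Longrightarrow> (\<Sum>l<length xs. f (xs ! l)) = sum f (set xs)"
  using sum_list_sum_nth[of "map f xs"] sum_list_distinct_conv_sum_set[of xs f]
  by (simp add: atLeast0LessThan)

lemma sum_nth_eq_sum_list_take:
  "m \<le> length xs \<Longrightarrow> (\<Sum>l<m. f (xs ! l)) = sum_list (map f (take m xs))"
  using sum_list_sum_nth[of "map f (take m xs)"] by (simp add: atLeast0LessThan min_absorb2)

lemma set_all_passages: "set (all_passages N S) = (\<Union>k<N. set (S k))"
  by (auto simp: all_passages_def)

lemma all_passages_Suc: "all_passages (Suc N) S = all_passages N S @ S N"
  by (simp add: all_passages_def)

lemma distinct_component:
  "distinct (all_passages N S) \<Longrightarrow> k < N \<Longrightarrow> distinct (S k)"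
  by (induction N) (auto simp: all_passages_Suc less_Suc_eq)

lemma component_unique:
  "distinct (all_passages N S) \<Longrightarrow> k < N \<Longrightarrow> k' < N \<Longrightarrow> p \<in> set (S k) \<Longrightarrow> p \<in> set (S k')
    \<Longrightarrow> k = k'"
proof (induction N)
  case (Suc N)
  then show ?case
    by (auto simp: all_passages_Suc less_Suc_eq set_all_passages)
qed simp

lemma comp_of_eqI:
  assumes "distinct (all_passages N S)" "k < N" "p \<in> set (S k)"
  shows "comp_of N S p = k"
  unfolding comp_of_def
  by (rule the_equality) (use assms component_unique in blast)+

lemma pos_of_nth:
  assumes "distinct (S k)" "m < length (S k)"
  shows "pos_of S k (S k ! m) = m"
  unfolding pos_of_def
  by (rule the_equality) (use assms nth_eq_iff_index_eq in auto)

lemma comp_of_cong: "(\<And>k. set (S' k) = set (S k)) \<Longrightarrow> comp_of N S' = comp_of N S"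
  unfolding comp_of_def by simp

lemma over_comp_cong:
  assumes "\<And>k. set (S' k) = set (S k)"
  shows "over_comp N S' = over_comp N S"
  unfolding over_comp_def comp_of_cong[OF assms] ..

lemma crossings_cong:
  assumes "\<And>k. set (S' k) = set (S k)"
  shows "crossings N S' = crossings N S"
  unfolding crossings_def set_all_passages assms ..

lemma writhe_cong:
  assumes "\<And>k. set (S' k) = set (S k)"
  shows "writhe N S' sg = writhe N S sg"
  unfolding writhe_def crossings_cong[OF assms] ..

lemma index_change_opposite: "index_change sg (c, \<not> b) = - index_change sg (c, b)"
  by (simp add: index_change_def alpha_passage_def)

lemma self_crossing_opposite_passage:
  assumes vld: "virtual_link_diagram N S sg" and "i < N"
    and p: "(c, b) \<in> set (S i)" and self: "is_self N S c"
  shows "(c, \<not> b) \<in> set (S i)"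
proof -
  have D: "distinct (all_passages N S)"
    using vld by (simp add: virtual_link_diagram_def)
  have "(c, \<not> b) \<in> set (all_passages N S)"
    using vld p \<open>i < N\<close> by (cases b) (auto simp: virtual_link_diagram_def set_all_passages)
  then obtain k where k: "k < N" "(c, \<not> b) \<in> set (S k)"
    by (auto simp: set_all_passages)
  have "comp_of N S (c, \<not> b) = comp_of N S (c, b)"
    using self by (cases b) (simp_all add: is_self_def)
  then have "k = i"
    using comp_of_eqI[OF D k] comp_of_eqI[OF D \<open>i < N\<close> p] by simp
  with k show ?thesis by simp
qed

lemma sum_self_index_change_eq_0:
  assumes "virtual_link_diagram N S sg" "i < N"
  shows "(\<Sum>p\<in>{p \<in> set (S i). is_self N S (fst p)}. index_change sg p) = 0"
  by (rule sum_involution_neg_eq_0[where \<sigma> = "\<lambda>(c, b). (c, \<not> b)"])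
    (auto simp: index_change_opposite intro: self_crossing_opposite_passage[OF assms])

lemma sum_list_index_change_eq_comp_weight:
  assumes vld: "virtual_link_diagram N S sg" and "i < N"
  shows "sum_list (map (index_change sg) (S i)) = comp_weight N S sg i"
proof -
  have "distinct (S i)"
    using vld \<open>i < N\<close> distinct_component by (auto simp: virtual_link_diagram_def)
  let ?self = "\<lambda>p. is_self N S (fst p)"
  have "sum_list (map (index_change sg) (S i)) = (\<Sum>p\<in>set (S i). index_change sg p)"
    using \<open>distinct (S i)\<close> by (rule sum_list_distinct_conv_sum_set)
  also have "\<dots> = (\<Sum>p\<in>set (S i). if ?self p then index_change sg p else 0)
      + (\<Sum>p\<in>set (S i). if ?self p then 0 else index_change sg p)"
    unfolding sum.distrib[symmetric] by (rule sum.cong) auto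
  also have "(\<Sum>p\<in>set (S i). if ?self p then index_change sg p else 0) = 0"
    using sum_self_index_change_eq_0[OF assms] by (simp add: sum.inter_filter)
  also have "(\<Sum>p\<in>set (S i). if ?self p then 0 else index_change sg p) = comp_weight N S sg i"
    unfolding comp_weight_def using \<open>distinct (S i)\<close> by (rule sum_nth_eq_sum_set[symmetric])
  finally show ?thesis
    by simp
qed

lemma babs_label_at:
  "babs (label_at N S sg a1 a2 k m) = a1 k + a2 k + (\<Sum>l<m. index_change sg (S k ! l))"
  unfolding label_at_def babs_def
  by (simp add: sum.distrib[symmetric] if_distrib[of "\<lambda>x. x + _"] cong: if_cong)

lemma babs_label_at_rotate1:
  assumes Si: "S i = x # ys" and a': "a1' i + a2' i = a1 i + a2 i - index_change sg x"
  shows "m \<le> length ys \<Longrightarrow> babs (label_at N (S(i := ys @ [x])) sg a1 a2 i m)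
      = babs (label_at N S sg a1' a2' i (Suc m))"
    and "d \<le> 1 \<Longrightarrow> babs (label_at N (S(i := ys @ [x])) sg a1 a2 i (length ys + d))
      = babs (label_at N S sg a1' a2' i d) + sum_list (map (index_change sg) (S i))"
proof -
  assume "m \<le> length ys"
  then show "babs (label_at N (S(i := ys @ [x])) sg a1 a2 i m) = babs (label_at N S sg a1' a2' i (Suc m))"
    using Si a' by (simp add: babs_label_at sum_nth_eq_sum_list_take del: sum.lessThan_Suc)
next
  assume "d \<le> 1"
  then have "d = 0 \<or> d = 1"
    by auto
  then show "babs (label_at N (S(i := ys @ [x])) sg a1 a2 i (length ys + d))
      = babs (label_at N S sg a1' a2' i d) + sum_list (map (index_change sg) (S i))"
    using Si a' by (auto simp: babs_label_at sum_nth_eq_sum_list_take)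
qed

lemma babs_label_in_out_rotate1:
  assumes vld: "virtual_link_diagram N S sg" and i: "i < N" and Si: "S i = x # ys"
    and a': "\<forall>k. a1' k + a2' k = a1 k + a2 k - (if k = i then index_change sg x else 0)"
    and p: "p \<in> set (all_passages N S)"
  defines "S' \<equiv> S(i := ys @ [x])" and "\<delta> \<equiv> if p = x then comp_weight N S sg i else 0"
  shows "babs (label_in N S' sg a1 a2 p) = babs (label_in N S sg a1' a2' p) + \<delta>"
    and "babs (label_out N S' sg a1 a2 p) = babs (label_out N S sg a1' a2' p) + \<delta>"
proof -
  have D: "distinct (all_passages N S)"
    using vld by (simp add: virtual_link_diagram_def)
  have "distinct (x # ys)"
    using distinct_component[OF D i] Si by simp
  have "a1' i + a2' i = a1 i + a2 i - index_change sg x"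
    using a' by simp
  note rotate = babs_label_at_rotate1[of S i x ys a1' a2' a1 a2 sg, OF Si this]
  have sets: "\<And>k. set (S' k) = set (S k)"
    using Si by (auto simp: S'_def)
  obtain k where k: "k < N" "p \<in> set (S k)"
    using p by (auto simp: set_all_passages)
  have comp: "comp_of N S' p = k" "comp_of N S p = k"
    using comp_of_eqI[OF D k] comp_of_cong[OF sets] by simp_all
  consider "k \<noteq> i" | "k = i" "p = x" | q where "k = i" "q < length ys" "p = ys ! q"
    using k Si by (cases "k = i") (auto simp: in_set_conv_nth)
  \<comment> \<open>d = 0 gives the incoming, d = 1 the outgoing label of p\<close>
  then have "babs (label_at N S' sg a1 a2 k (pos_of S' k p + d))
    = babs (label_at N S sg a1' a2' k (pos_of S k p + d)) + \<delta>" if "d \<le> 1" for d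
  proof cases
    case 1
    then have "p \<noteq> x"
      using component_unique[OF D i k(1), of x] k(2) Si by auto
    moreover have "pos_of S' k = pos_of S k"
      using 1 by (simp add: S'_def pos_of_def fun_eq_iff)
    ultimately show ?thesis
      using 1 a' by (simp add: S'_def \<delta>_def babs_label_at)
  next
    case 2
    have "pos_of S i p = 0" "pos_of S' i p = length ys"
      using pos_of_nth[of S i 0] pos_of_nth[of S' i "length ys"] \<open>distinct (x # ys)\<close> 2 Si
      by (simp_all add: S'_def)
    then show ?thesis
      using 2 rotate(2)[OF that] sum_list_index_change_eq_comp_weight[OF vld i]
      by (simp add: S'_def \<delta>_def)
  next
    case 3
    have "pos_of S i p = Suc q" "pos_of S' i p = q"
      using pos_of_nth[of S i "Suc q"] pos_of_nth[of S' i q] \<open>distinct (x # ys)\<close> 3 Si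
      by (simp_all add: S'_def nth_append)
    moreover have "p \<noteq> x"
      using 3 \<open>distinct (x # ys)\<close> by auto
    ultimately show ?thesis
      using 3 rotate(1)[of "q + d"] that
      by (simp add: S'_def \<delta>_def)
  qed
  from this[of 0] this[of 1] show "babs (label_in N S' sg a1 a2 p) = babs (label_in N S sg a1' a2' p) + \<delta>"
    and "babs (label_out N S' sg a1 a2 p) = babs (label_out N S sg a1' a2' p) + \<delta>"
    by (simp_all add: label_in_def label_out_def comp)
qed

lemma crossing_weight_rotate1:
  assumes vld: "virtual_link_diagram N S sg" and i: "i < N" and Si: "S i = x # ys"
    and a': "\<forall>k. a1' k + a2' k = a1 k + a2 k - (if k = i then index_change sg x else 0)"
    and d: "d \<in> crossings N S"
  shows "crossing_weight N (S(i := ys @ [x])) sg a1 a2 d = crossing_weight N S sg a1' a2' d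
    + (if d = fst x then (if snd x then comp_weight N S sg i else - comp_weight N S sg i) else 0)"
proof -
  have "(d, b) \<in> set (all_passages N S)" for b
    using vld d by (cases b) (auto simp: virtual_link_diagram_def crossings_def)
  from babs_label_in_out_rotate1[OF vld i Si a' this] show ?thesis
    by (cases x) (auto simp: crossing_weight_def alpha_passage_def beta_passage_def)
qed

lemma expv_add: "expv k (v + w) = (\<lambda>l. expv k v l + expv k w l)"
  by (simp add: expv_def fun_eq_iff)

lemma expv_crossing_weight_rotate1:
  assumes vld: "virtual_link_diagram N S sg" and i: "i < N" and Si: "S i = x # ys"
    and a': "\<forall>k. a1' k + a2' k = a1 k + a2 k - (if k = i then index_change sg x else 0)"
    and d: "d \<in> crossings N S"
  defines "n \<equiv> comp_weight N S sg i"
  shows "expv (over_comp N S d) (crossing_weight N (S(i := ys @ [x])) sg a1 a2 d)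
    = (\<lambda>l. expv (over_comp N S d) (crossing_weight N S sg a1' a2' d) l
        + (if d = fst x then (if snd x then expv i n else expv (over_comp N S d) (- n)) l else 0))"
proof -
  have "over_comp N S d = i" if "x = (d, True)"
    using comp_of_eqI[of N S i x] vld i Si that by (simp add: virtual_link_diagram_def over_comp_def)
  then show ?thesis
    using crossing_weight_rotate1[OF vld i Si a' d]
    by (cases x) (auto simp: n_def expv_add expv_def)
qed

lemma affine_index_poly_eq_minus_writhe:
  "affine_index_poly N S sg a1 a2 = (\<lambda>e.
     (\<Sum>d\<in>crossings N S. sg d * (if e = expv (over_comp N S d) (crossing_weight N S sg a1 a2 d) then 1 else 0))
     - writhe N S sg * (if e = (\<lambda>_. 0) then 1 else 0))"
  by (simp add: affine_index_poly_def writhe_def right_diff_distrib sum_subtractf sum_distrib_right)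

theorem proposition7:
  fixes N :: nat and S :: gauss and sg :: "nat \<Rightarrow> int" and i :: nat
    and a1 a2 a1' a2' :: "nat \<Rightarrow> int"
  assumes "virtual_link_diagram N S sg"
    and "i < N"
    and "S i \<noteq> []"
    and "\<forall>k. a1' k + a2' k
              = a1 k + a2 k - (if k = i then index_change sg (hd (S i)) else 0)"
  shows "let c = fst (hd (S i));
             n = comp_weight N S sg i;
             j = over_comp N S c;
             S' = S(i := rotate1 (S i));
             mult = (if snd (hd (S i)) then expv i n else expv j (- n))
         in affine_index_poly N S' sg a1 a2 =
            (\<lambda>e. (\<Sum>d\<in>crossings N S. sg d *
                     (if e = (\<lambda>l. expv (over_comp N S d) (crossing_weight N S sg a1' a2' d) l
                                  + (if d = c then mult l else 0))
                      then 1 else 0))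
                 - writhe N S sg * (if e = (\<lambda>_. 0) then 1 else 0))"
proof -
  obtain x ys where Si: "S i = x # ys"
    using assms(3) by (cases "S i") auto
  have sets: "\<And>k. set ((S(i := ys @ [x])) k) = set (S k)"
    using Si by auto
  show ?thesis
    using expv_crossing_weight_rotate1[OF assms(1,2) Si] assms(4) Si
    by (simp add: Let_def affine_index_poly_eq_minus_writhe crossings_cong[OF sets]
        over_comp_cong[OF sets] writhe_cong[OF sets] cong: sum.cong if_cong)
qed

end
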